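(* Fix the number of treatment days $N\ge1$ and consider the problem: minimize $Y_{N-1}^+$ over doses $d_0,\dots,d_{N-1}\ge0$ subject to $\sum_{k=0}^{N-1}\mathrm{BED}_O(d_k)\le c$. Assume $\phi(x)>0$ for all $x>0$ and that $\phi$ is non-increasing in $x$. If $[\alpha/\beta]_O\ge\gamma[\alpha/\beta]_T$, then it is optimal to deliver a single dose $$d_{N-1}^*=\frac{[\alpha/\beta]_O}{2\gamma}\left[\sqrt{1+\frac{4c}{[\alpha/\beta]_O}}-1\right]$$ on the last day and $d_i=0$ for $i<N-1$. If $[\alpha/\beta]_O<\gamma[\alpha/\beta]_T$, then any optimal sequence of doses satisfies $d_0^*\le d_1^*\le\cdots\le d_{N-1}^*$.
   Context: Model: Tumor parameters $\alpha_T>0$, $\beta_T>0$, $[\alpha/\beta]_T=\alpha_T/\beta_T$; organ-at-risk (OAR) parameter $[\alpha/\beta]_O>0$; sparing factor $0<\gamma<1$; OAR limit $c>0$. Define $\mathrm{BED}_T(d)=d\left(1+\frac{d}{[\alpha/\beta]_T}\right)$ and $\mathrm{BED}_O(d)=\gamma d\left(1+\frac{\gamma d}{[\alpha/\beta]_O}\right)$. Tumor growth between doses follows $\frac{1}{x}\frac{dx}{dt}=\phi(x)$, with $\phi:(0,\infty)\to\mathbb{R}$ continuous and non-increasing. Doses $d_0,\dots,d_{N-1}$ are delivered at times $0,1,\dots,N-1$. With $Y=\ln(\text{number of tumor cells})/\alpha_T$, let $F$ be the one-day growth map for $Y$ under the ODE. With initial cell number $X_0>0$ and $Y_0^-=\ln(X_0)/\alpha_T$: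 $Y_0^+=Y_0^--\mathrm{BED}_T(d_0)$, $Y_{i+1}^+=F(Y_i^+)-\mathrm{BED}_T(d_{i+1})$ for $i=0,\dots,N-2$. *)

theory Defs
  imports "HOL-Analysis.Analysis"
begin

definition BED_T :: "real \<Rightarrow> real \<Rightarrow> real" where
  "BED_T abT d = d * (1 + d / abT)"

definition BED_O :: "real \<Rightarrow> real \<Rightarrow> real \<Rightarrow> real" where
  "BED_O abO \<gamma> d = \<gamma> * d * (1 + \<gamma> * d / abO)"

definition growth_sol :: "(real \<Rightarrow> real) \<Rightarrow> real \<Rightarrow> (real \<Rightarrow> real) \<Rightarrow> bool" where
  "growth_sol \<phi> x0 x \<longleftrightarrow> x 0 = x0 \<and>
     (\<forall>t\<in>{0..1}. 0 < x t \<and> (x has_real_derivative (x t * \<phi> (x t))) (at t within {0..1}))"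

text \<open>One-day growth map for Y = ln(number of cells)/alpha_T.\<close>
definition F_map :: "(real \<Rightarrow> real) \<Rightarrow> real \<Rightarrow> real \<Rightarrow> real" where
  "F_map \<phi> \<alpha>T y = ln (THE v. \<exists>x. growth_sol \<phi> (exp (\<alpha>T * y)) x \<and> v = x 1) / \<alpha>T"

fun Yplus :: "(real \<Rightarrow> real) \<Rightarrow> real \<Rightarrow> real \<Rightarrow> real \<Rightarrow> (nat \<Rightarrow> real) \<Rightarrow> nat \<Rightarrow> real" where
  "Yplus \<phi> \<alpha>T abT X0 d 0 = ln X0 / \<alpha>T - BED_T abT (d 0)"
| "Yplus \<phi> \<alpha>T abT X0 d (Suc i) = F_map \<phi> \<alpha>T (Yplus \<phi> \<alpha>T abT X0 d i) - BED_T abT (d (Suc i))"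

definition feasible :: "nat \<Rightarrow> real \<Rightarrow> real \<Rightarrow> real \<Rightarrow> (nat \<Rightarrow> real) \<Rightarrow> bool" where
  "feasible N abO \<gamma> c d \<longleftrightarrow> (\<forall>i<N. 0 \<le> d i) \<and> (\<Sum>k<N. BED_O abO \<gamma> (d k)) \<le> c"

definition optimal :: "(real \<Rightarrow> real) \<Rightarrow> real \<Rightarrow> real \<Rightarrow> real \<Rightarrow> nat \<Rightarrow> real \<Rightarrow> real \<Rightarrow> real
    \<Rightarrow> (nat \<Rightarrow> real) \<Rightarrow> bool" where
  "optimal \<phi> \<alpha>T abT X0 N abO \<gamma> c d \<longleftrightarrow> feasible N abO \<gamma> c d \<and>
     (\<forall>d'. feasible N abO \<gamma> c d' \<longrightarrow> Yplus \<phi> \<alpha>T abT X0 d (N - 1) \<le> Yplus \<phi> \<alpha>T abT X0 d' (N - 1))"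

end

theory Submission
  imports Defs
begin

text \<open>
  Two facts drive the result. First, BED_T d is a linear term in d plus a positive multiple of
  BED_O d, with linear coefficient 1 - [\<alpha>/\<beta>]_O / (\<gamma> [\<alpha>/\<beta>]_T). For a fixed total OAR dose the
  BED_O part is fixed, so the tumour effect is governed by the total physical dose: if the
  coefficient is non-positive, merging doses (which lowers the total physical dose at fixed
  BED_O, by superadditivity of BED_O) helps; if it is positive, equalizing two unequal doses
  (which raises it, by strict convexity of BED_O) helps.
  Second, writing the ODE in Y = ln x / \<alpha>_T and separating variables, the one-day map F is
  strictly increasing and satisfies F (y + \<delta>) \<le> F y + \<delta> for \<delta> \<ge> 0, because a larger tumour
  grows more slowly. Hence dose delivered late is worth at least as much as dose delivered
  early, and a strict gain on one day persists to the last day.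
\<close>

section \<open>Biologically effective doses\<close>

lemma BED_T_0 [simp]: "BED_T abT 0 = 0"
  and BED_O_0 [simp]: "BED_O abO \<gamma> 0 = 0"
  by (simp_all add: BED_T_def BED_O_def)

lemma BED_T_nonneg: "0 < abT \<Longrightarrow> 0 \<le> d \<Longrightarrow> 0 \<le> BED_T abT d"
  unfolding BED_T_def by simp

lemma BED_T_mono:
  assumes "0 < abT" "0 \<le> x" "x \<le> y"
  shows "BED_T abT x \<le> BED_T abT y"
proof -
  have "x * x \<le> y * y" using assms by (intro mult_mono) auto
  then have "x + x * x / abT \<le> y + y * y / abT"
    using assms by (intro add_mono divide_right_mono) auto
  then show ?thesis unfolding BED_T_def by (simp add: algebra_simps)
qed

text \<open>The positive root of the quadratic BED_O d = u; for u = c it is the dose d*_{N-1}.\<close>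
definition BED_O_inv :: "real \<Rightarrow> real \<Rightarrow> real \<Rightarrow> real" where
  "BED_O_inv abO \<gamma> u = abO / (2 * \<gamma>) * (sqrt (1 + 4 * u / abO) - 1)"

context
  fixes abO \<gamma> :: real
  assumes abO_pos: "0 < abO" and \<gamma>_pos: "0 < \<gamma>"
begin

lemma BED_O_nonneg: "0 \<le> d \<Longrightarrow> 0 \<le> BED_O abO \<gamma> d"
  unfolding BED_O_def using abO_pos \<gamma>_pos by simp

lemma BED_O_strict_mono:
  assumes "0 \<le> x" "x < y"
  shows "BED_O abO \<gamma> x < BED_O abO \<gamma> y"
proof -
  have "\<gamma> * x < \<gamma> * y" using assms \<gamma>_pos by simp
  moreover have "\<gamma> * x * (\<gamma> * x) \<le> \<gamma> * y * (\<gamma> * y)" using assms \<gamma>_pos by (intro mult_mono) auto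
  ultimately have "\<gamma> * x + \<gamma> * x * (\<gamma> * x) / abO < \<gamma> * y + \<gamma> * y * (\<gamma> * y) / abO"
    using abO_pos by (intro add_less_le_mono divide_right_mono) auto
  then show ?thesis unfolding BED_O_def by (simp add: algebra_simps)
qed

lemma BED_O_le_iff: "0 \<le> x \<Longrightarrow> 0 \<le> y \<Longrightarrow> BED_O abO \<gamma> x \<le> BED_O abO \<gamma> y \<longleftrightarrow> x \<le> y"
  using BED_O_strict_mono[of x y] BED_O_strict_mono[of y x] by (cases x y rule: linorder_cases) auto

lemma BED_O_superadditive:
  "0 \<le> a \<Longrightarrow> 0 \<le> b \<Longrightarrow> BED_O abO \<gamma> a + BED_O abO \<gamma> b \<le> BED_O abO \<gamma> (a + b)"
  unfolding BED_O_def using abO_pos \<gamma>_pos by (simp add: field_simps power2_eq_square)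

lemma BED_O_midpoint_less:
  assumes "A \<noteq> B"
  shows "BED_O abO \<gamma> ((A + B) / 2) < (BED_O abO \<gamma> A + BED_O abO \<gamma> B) / 2"
proof -
  have "(BED_O abO \<gamma> A + BED_O abO \<gamma> B) / 2 - BED_O abO \<gamma> ((A + B) / 2) = \<gamma>\<^sup>2 / abO * (A - B)\<^sup>2 / 4"
    unfolding BED_O_def using abO_pos by (simp add: field_simps power2_eq_square)
  moreover have "0 < \<gamma>\<^sup>2 / abO * (A - B)\<^sup>2 / 4" using assms abO_pos \<gamma>_pos by simp
  ultimately show ?thesis by linarith
qed

lemma BED_O_inv_nonneg: "0 \<le> u \<Longrightarrow> 0 \<le> BED_O_inv abO \<gamma> u"
  unfolding BED_O_inv_def using abO_pos \<gamma>_pos by simp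

lemma BED_O_inv_mono: "0 \<le> u \<Longrightarrow> u \<le> v \<Longrightarrow> BED_O_inv abO \<gamma> u \<le> BED_O_inv abO \<gamma> v"
  unfolding BED_O_inv_def using abO_pos \<gamma>_pos
  by (intro mult_left_mono diff_right_mono real_sqrt_le_mono add_left_mono divide_right_mono) auto

lemma BED_O_BED_O_inv: "0 \<le> u \<Longrightarrow> BED_O abO \<gamma> (BED_O_inv abO \<gamma> u) = u"
proof -
  assume u: "0 \<le> u"
  define s where "s = sqrt (1 + 4 * u / abO)"
  have "s\<^sup>2 = 1 + 4 * u / abO" unfolding s_def using u abO_pos by simp
  moreover have "BED_O abO \<gamma> (BED_O_inv abO \<gamma> u) = abO * (s\<^sup>2 - 1) / 4"
    unfolding BED_O_def BED_O_inv_def s_def[symmetric] using abO_pos \<gamma>_pos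
    by (simp add: field_simps power2_eq_square)
  ultimately show ?thesis using abO_pos by simp
qed


lemma BED_O_inv_mean:
  assumes "0 \<le> B" "B \<le> A"
  defines "m \<equiv> BED_O_inv abO \<gamma> ((BED_O abO \<gamma> A + BED_O abO \<gamma> B) / 2)"
  shows "0 \<le> m" and "2 * BED_O abO \<gamma> m = BED_O abO \<gamma> A + BED_O abO \<gamma> B" and "m \<le> A"
proof -
  have "BED_O abO \<gamma> B \<le> BED_O abO \<gamma> A" using assms BED_O_le_iff by simp
  moreover have "0 \<le> BED_O abO \<gamma> B" using assms BED_O_nonneg by simp
  ultimately show "0 \<le> m" "2 * BED_O abO \<gamma> m = BED_O abO \<gamma> A + BED_O abO \<gamma> B"
    unfolding m_def by (simp_all add: BED_O_inv_nonneg BED_O_BED_O_inv)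
  with \<open>BED_O abO \<gamma> B \<le> BED_O abO \<gamma> A\<close> show "m \<le> A"
    using BED_O_le_iff[of m A] assms by simp
qed
end

context
  fixes abO \<gamma> abT :: real
  assumes abO_pos: "0 < abO" and \<gamma>_pos: "0 < \<gamma>" and abT_pos: "0 < abT"
begin

lemma BED_T_eq_linear_plus_BED_O:
  "BED_T abT x = x * (1 - abO / (\<gamma> * abT)) + abO / (\<gamma>\<^sup>2 * abT) * BED_O abO \<gamma> x"
  unfolding BED_T_def BED_O_def using abO_pos \<gamma>_pos abT_pos
  by (simp add: field_simps power2_eq_square)

lemma BED_T_pair_diff_of_equal_BED_O:
  assumes "BED_O abO \<gamma> e + BED_O abO \<gamma> e' = BED_O abO \<gamma> a + BED_O abO \<gamma> b"
  shows "BED_T abT e + BED_T abT e' - (BED_T abT a + BED_T abT b) =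
    (e + e' - a - b) * (1 - abO / (\<gamma> * abT))"
proof -
  define r where "r = 1 - abO / (\<gamma> * abT)"
  define q where "q = abO / (\<gamma>\<^sup>2 * abT)"
  have "q * BED_O abO \<gamma> e + q * BED_O abO \<gamma> e' = q * BED_O abO \<gamma> a + q * BED_O abO \<gamma> b"
    using assms by (simp flip: distrib_left)
  then show ?thesis
    unfolding BED_T_eq_linear_plus_BED_O[of a] BED_T_eq_linear_plus_BED_O[of b]
      BED_T_eq_linear_plus_BED_O[of e] BED_T_eq_linear_plus_BED_O[of e']
      r_def[symmetric] q_def[symmetric]
    by (simp add: algebra_simps)
qed

lemma BED_T_add_le_merged:
  assumes "\<gamma> * abT \<le> abO" "0 \<le> a" "0 \<le> b" "0 \<le> e"
    and e: "BED_O abO \<gamma> e = BED_O abO \<gamma> a + BED_O abO \<gamma> b"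
  shows "BED_T abT a + BED_T abT b \<le> BED_T abT e"
proof -
  have "e \<le> a + b"
    using BED_O_superadditive[OF abO_pos \<gamma>_pos, of a b] BED_O_le_iff[OF abO_pos \<gamma>_pos, of e "a + b"]
      assms by simp
  moreover have "1 - abO / (\<gamma> * abT) \<le> 0" using assms \<gamma>_pos abT_pos by (simp add: field_simps)
  ultimately have "0 \<le> (e - a - b) * (1 - abO / (\<gamma> * abT))" by (intro mult_nonpos_nonpos) auto
  then show ?thesis using BED_T_pair_diff_of_equal_BED_O[of e 0 a b] e by simp
qed

lemma BED_T_sum_le_merged:
  assumes merge: "\<gamma> * abT \<le> abO"
  shows "(\<And>k. k < (n::nat) \<Longrightarrow> 0 \<le> d k) \<Longrightarrow>
    (\<Sum>k<n. BED_T abT (d k)) \<le> BED_T abT (BED_O_inv abO \<gamma> (\<Sum>k<n. BED_O abO \<gamma> (d k)))"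
proof (induction n)
  case 0
  show ?case by (simp add: BED_O_inv_def)
next
  case (Suc n)
  let ?S = "\<Sum>k<n. BED_O abO \<gamma> (d k)"
  have S: "0 \<le> ?S" using Suc.prems by (intro sum_nonneg BED_O_nonneg[OF abO_pos \<gamma>_pos]) auto
  have dn: "0 \<le> d n" using Suc.prems by simp
  have "(\<Sum>k<Suc n. BED_T abT (d k)) \<le> BED_T abT (BED_O_inv abO \<gamma> ?S) + BED_T abT (d n)"
    using Suc by simp
  also have "\<dots> \<le> BED_T abT (BED_O_inv abO \<gamma> (?S + BED_O abO \<gamma> (d n)))"
    using S dn BED_O_nonneg[OF abO_pos \<gamma>_pos dn]
    by (intro BED_T_add_le_merged merge)
      (simp_all add: BED_O_inv_nonneg[OF abO_pos \<gamma>_pos] BED_O_BED_O_inv[OF abO_pos \<gamma>_pos])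
  finally show ?case by simp
qed

lemma BED_T_add_less_equalized:
  assumes "abO < \<gamma> * abT" "0 \<le> B" "B < A" "0 \<le> m"
    and m: "2 * BED_O abO \<gamma> m = BED_O abO \<gamma> A + BED_O abO \<gamma> B"
  shows "BED_T abT A + BED_T abT B < 2 * BED_T abT m"
proof -
  have "BED_O abO \<gamma> ((A + B) / 2) < BED_O abO \<gamma> m"
    using BED_O_midpoint_less[OF abO_pos \<gamma>_pos, of A B] assms by simp
  then have "(A + B) / 2 < m"
    using BED_O_le_iff[OF abO_pos \<gamma>_pos, of m "(A + B) / 2"] assms by force
  moreover have "0 < 1 - abO / (\<gamma> * abT)" using assms \<gamma>_pos abT_pos by (simp add: field_simps)
  ultimately have "0 < (m + m - A - B) * (1 - abO / (\<gamma> * abT))" by (intro mult_pos_pos) auto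
  then show ?thesis using BED_T_pair_diff_of_equal_BED_O[of m m A B] m by simp
qed

end

section \<open>Dose sequences\<close>

lemma Yplus_cong:
  "(\<And>k. k \<le> j \<Longrightarrow> d' k = d k) \<Longrightarrow> Yplus \<phi> \<alpha>T abT X0 d' j = Yplus \<phi> \<alpha>T abT X0 d j"
  by (induction j) auto

lemma Yplus_change_last_dose:
  assumes "\<And>k. k < j \<Longrightarrow> d' k = d k"
  shows "Yplus \<phi> \<alpha>T abT X0 d' j = Yplus \<phi> \<alpha>T abT X0 d j + BED_T abT (d j) - BED_T abT (d' j)"
proof (cases j)
  case (Suc i)
  then have "Yplus \<phi> \<alpha>T abT X0 d' i = Yplus \<phi> \<alpha>T abT X0 d i" using assms by (intro Yplus_cong) auto
  then show ?thesis using Suc by simp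
qed simp

lemma Yplus_single_dose:
  "(\<And>k. k < j \<Longrightarrow> d k = 0) \<Longrightarrow>
    Yplus \<phi> \<alpha>T abT X0 d j = (F_map \<phi> \<alpha>T ^^ j) (ln X0 / \<alpha>T) - BED_T abT (d j)"
  by (induction j) auto

lemma feasible_equalize_pair:
  assumes "feasible N abO \<gamma> c d" "Suc i < N" "0 \<le> m"
    and m: "2 * BED_O abO \<gamma> m = BED_O abO \<gamma> (d i) + BED_O abO \<gamma> (d (Suc i))"
  shows "feasible N abO \<gamma> c (d(i := m, Suc i := m))"
  unfolding feasible_def
proof
  show "\<forall>k<N. 0 \<le> (d(i := m, Suc i := m)) k" using assms unfolding feasible_def by auto
  define h where "h k = BED_O abO \<gamma> ((d(i := m, Suc i := m)) k) - BED_O abO \<gamma> (d k)" for k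
  have "(\<Sum>k<N. h k) = (\<Sum>k\<in>{i, Suc i}. h k)"
    by (rule sum.mono_neutral_right) (use assms in \<open>auto simp: h_def\<close>)
  also have "\<dots> = 0" using m by (simp add: h_def)
  finally show "(\<Sum>k<N. BED_O abO \<gamma> ((d(i := m, Suc i := m)) k)) \<le> c"
    using assms(1) unfolding h_def feasible_def by (simp add: sum_subtractf)
qed

section \<open>The one-day growth map\<close>

locale growth_law =
  fixes \<phi> :: "real \<Rightarrow> real" and \<alpha>T :: real
  assumes \<alpha>T_pos: "0 < \<alpha>T"
    and \<phi>_cont: "continuous_on {0<..} \<phi>"
    and \<phi>_antimono: "\<And>x y. 0 < x \<Longrightarrow> x \<le> y \<Longrightarrow> \<phi> y \<le> \<phi> x"
    and \<phi>_pos: "\<And>x. 0 < x \<Longrightarrow> 0 < \<phi> x"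
begin

abbreviation F :: "real \<Rightarrow> real" where "F \<equiv> F_map \<phi> \<alpha>T"

text \<open>
  Along a solution, Y = ln x / \<alpha>_T satisfies Y' = \<phi> (exp (\<alpha>_T Y)) / \<alpha>_T, so growth_time a y is
  the time needed to grow from level a to level y, and F adds one unit of time.
\<close>
definition time_rate :: "real \<Rightarrow> real" where
  "time_rate y = \<alpha>T / \<phi> (exp (\<alpha>T * y))"

definition growth_time :: "real \<Rightarrow> real \<Rightarrow> real" where
  "growth_time a y = integral {a..y} time_rate"

lemma time_rate_pos: "0 < time_rate y"
  unfolding time_rate_def using \<alpha>T_pos \<phi>_pos by simp

lemma time_rate_mono: "y \<le> z \<Longrightarrow> time_rate y \<le> time_rate z"
proof -
  assume "y \<le> z"
  then have "\<phi> (exp (\<alpha>T * z)) \<le> \<phi> (exp (\<alpha>T * y))" using \<alpha>T_pos by (intro \<phi>_antimono) auto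
  then show ?thesis unfolding time_rate_def using \<alpha>T_pos \<phi>_pos by (intro divide_left_mono) auto
qed

lemma continuous_on_time_rate: "continuous_on UNIV time_rate"
proof -
  have "continuous_on UNIV (\<lambda>y. \<phi> (exp (\<alpha>T * y)))"
    by (rule continuous_on_compose2[OF \<phi>_cont]) (auto intro!: continuous_intros)
  then show ?thesis unfolding time_rate_def using \<phi>_pos
    by (intro continuous_intros) (auto simp: less_imp_neq[symmetric])
qed

lemma growth_time_has_derivative:
  assumes "a < y"
  shows "(growth_time a has_real_derivative time_rate y) (at y)"
proof -
  have "((\<lambda>x. integral {a..x} time_rate) has_real_derivative time_rate y) (at y within {a..y+1})"
    by (rule integral_has_real_derivative)
      (use assms continuous_on_subset[OF continuous_on_time_rate] in auto)
  moreover have "at y within {a..y+1} = at y" using assms by (intro at_within_Icc_at) auto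
  ultimately show ?thesis unfolding growth_time_def by simp
qed

lemma isCont_growth_time: "a < y \<Longrightarrow> isCont (growth_time a) y"
  using growth_time_has_derivative DERIV_isCont by blast

lemma growth_time_strict_mono:
  assumes "a < y" "y < z"
  shows "growth_time a y < growth_time a z"
proof (rule DERIV_pos_imp_increasing[OF assms(2)])
  fix x assume "y \<le> x" "x \<le> z"
  then show "\<exists>D. (growth_time a has_real_derivative D) (at x) \<and> 0 < D"
    using assms growth_time_has_derivative[of a x] time_rate_pos[of x] by auto
qed

lemma growth_time_le_iff:
  "a < y \<Longrightarrow> a < z \<Longrightarrow> growth_time a y \<le> growth_time a z \<longleftrightarrow> y \<le> z"
  using growth_time_strict_mono[of a y z] growth_time_strict_mono[of a z y]
  by (cases y z rule: linorder_cases) auto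

lemma growth_time_eq_iff:
  "a < y \<Longrightarrow> a < z \<Longrightarrow> growth_time a y = growth_time a z \<longleftrightarrow> y = z"
  using growth_time_le_iff[of a y z] growth_time_le_iff[of a z y] by auto

lemma growth_time_increment_ge:
  assumes "a < y" "y \<le> z"
  shows "(z - y) * time_rate y \<le> growth_time a z - growth_time a y"
proof -
  have "growth_time a y - y * time_rate y \<le> growth_time a z - z * time_rate y"
  proof (rule DERIV_nonneg_imp_nondecreasing[OF assms(2)])
    fix s assume "y \<le> s" "s \<le> z"
    then show "\<exists>D. ((\<lambda>s. growth_time a s - s * time_rate y) has_real_derivative D) (at s) \<and> 0 \<le> D"
      using assms growth_time_has_derivative[of a s] time_rate_mono[of y s]
      by (intro exI[of _ "time_rate s - time_rate y"]) (auto intro!: derivative_eq_intros)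
  qed
  then show ?thesis by (simp add: algebra_simps)
qed

lemma growth_time_increment_mono:
  assumes "a < y" "y \<le> w" "0 \<le> c"
  shows "growth_time a (y + c) - growth_time a y \<le> growth_time a (w + c) - growth_time a w"
proof (rule DERIV_nonneg_imp_nondecreasing[OF assms(2)])
  fix s assume s: "y \<le> s" "s \<le> w"
  have "((\<lambda>s. growth_time a (s + c) - growth_time a s) has_real_derivative
      time_rate (s + c) * 1 - time_rate s) (at s)"
    using assms s growth_time_has_derivative[of a s] growth_time_has_derivative[of a "s + c"]
    by (intro derivative_intros DERIV_chain2[of "growth_time a"])
      (auto intro!: derivative_eq_intros)
  moreover have "0 \<le> time_rate (s + c) * 1 - time_rate s"
    using time_rate_mono[of s "s + c"] assms by simp
  ultimately show "\<exists>D. ((\<lambda>s. growth_time a (s + c) - growth_time a s)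
      has_real_derivative D) (at s) \<and> 0 \<le> D"
    by blast
qed

lemma growth_time_exceeds:
  assumes "a < y"
  obtains z where "y < z" "growth_time a y + 1 < growth_time a z"
proof
  define z where "z = y + 1 / time_rate y + 1"
  show "y < z" unfolding z_def using time_rate_pos[of y] by (simp add: add_pos_pos)
  have "(z - y) * time_rate y \<le> growth_time a z - growth_time a y"
    using growth_time_increment_ge[of a y z] assms \<open>y < z\<close> by simp
  moreover have "(z - y) * time_rate y = 1 + time_rate y"
    unfolding z_def using time_rate_pos[of y] by (simp add: field_simps)
  ultimately show "growth_time a y + 1 < growth_time a z" using time_rate_pos[of y] by simp
qed

lemma inv_into_growth_time_eq:
  assumes "a < b" "x \<in> {b..z}"
  shows "inv_into {b..z} (growth_time a) (growth_time a x) = x"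
proof -
  have "inj_on (growth_time a) {b..z}"
  proof (rule inj_onI)
    fix u v assume "u \<in> {b..z}" "v \<in> {b..z}" "growth_time a u = growth_time a v"
    then show "u = v" using assms growth_time_eq_iff[of a u v] by simp
  qed
  then show ?thesis using assms by (simp add: inv_into_f_f)
qed

lemma growth_time_inv_into:
  assumes "a < b" "b \<le> z" "growth_time a b \<le> w" "w \<le> growth_time a z"
  shows "inv_into {b..z} (growth_time a) w \<in> {b..z}"
    and "growth_time a (inv_into {b..z} (growth_time a) w) = w"
proof -
  have "\<forall>x. b \<le> x \<and> x \<le> z \<longrightarrow> isCont (growth_time a) x"
    using assms isCont_growth_time by auto
  then have "\<exists>x\<ge>b. x \<le> z \<and> growth_time a x = w"
    using IVT[of "growth_time a" b w z] assms by simp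
  then have "w \<in> growth_time a ` {b..z}" by auto
  then show "inv_into {b..z} (growth_time a) w \<in> {b..z}"
    and "growth_time a (inv_into {b..z} (growth_time a) w) = w"
    by (rule inv_into_into, rule f_inv_into_f)
qed

lemma inv_into_growth_time_has_derivative:
  assumes "a < b" "b \<le> z" "growth_time a b < w" "w < growth_time a z"
  defines "G \<equiv> inv_into {b..z} (growth_time a)"
  shows "(G has_real_derivative inverse (time_rate (G w))) (at w)"
proof -
  have Gw: "b \<le> G w" "G w \<le> z" "growth_time a (G w) = w"
    using growth_time_inv_into[of a b z w] assms by auto
  have "b < G w" "G w < z"
    using Gw assms growth_time_le_iff[of a "G w" b] growth_time_le_iff[of a z "G w"] by auto
  define r where "r = min (G w - b) (z - G w)"
  have near: "x \<in> {b..z}" if "\<bar>x - G w\<bar> \<le> r" for x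
    using that unfolding r_def by (auto simp: abs_le_iff)
  have "isCont G (growth_time a (G w))"
  proof (rule isCont_inverse_function[where f = "growth_time a" and x = "G w"])
    show "0 < r" unfolding r_def using \<open>b < G w\<close> \<open>G w < z\<close> by simp
  next
    fix x assume "\<bar>x - G w\<bar> \<le> r"
    then have "x \<in> {b..z}" by (rule near)
    then show "G (growth_time a x) = x"
      unfolding G_def by (rule inv_into_growth_time_eq[OF assms(1)])
  next
    fix x assume "\<bar>x - G w\<bar> \<le> r"
    then have "x \<in> {b..z}" by (rule near)
    then show "isCont (growth_time a) x" using assms by (intro isCont_growth_time) simp
  qed
  show ?thesis
  proof (rule DERIV_inverse_function[where f = "growth_time a" and a = "growth_time a b"
        and b = "growth_time a z"])
    show "(growth_time a has_real_derivative time_rate (G w)) (at (G w))"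
      using Gw assms by (intro growth_time_has_derivative) simp
    show "time_rate (G w) \<noteq> 0" using time_rate_pos[of "G w"] by simp
    show "growth_time a b < w" "w < growth_time a z" using assms by auto
    show "isCont G w" using \<open>isCont G (growth_time a (G w))\<close> Gw by simp
    fix v assume "growth_time a b < v" "v < growth_time a z"
    then show "growth_time a (G v) = v"
      unfolding G_def using assms by (intro growth_time_inv_into(2)) simp_all
  qed
qed

lemma growth_sol_exists: "\<exists>x. growth_sol \<phi> (exp (\<alpha>T * y)) x"
proof -
  define a where "a = y - 2"
  obtain z where "y < z" and z: "growth_time a y + 1 < growth_time a z"
    using growth_time_exceeds[of a y] unfolding a_def by auto
  define G where "G = inv_into {y - 1..z} (growth_time a)"
  have start: "growth_time a (y - 1) < growth_time a y"
    unfolding a_def by (rule growth_time_strict_mono) simp_all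
  have G': "(G has_real_derivative inverse (time_rate (G w))) (at w)"
    if "growth_time a y \<le> w" "w \<le> growth_time a y + 1" for w
    unfolding G_def
    by (rule inv_into_growth_time_has_derivative)
      (use that start z \<open>y < z\<close> in \<open>simp_all add: a_def\<close>)
  define x where "x t = exp (\<alpha>T * G (growth_time a y + t))" for t
  have "growth_sol \<phi> (exp (\<alpha>T * y)) x"
    unfolding growth_sol_def
  proof (intro conjI ballI)
    show "x 0 = exp (\<alpha>T * y)"
      unfolding x_def G_def a_def using \<open>y < z\<close> by (simp add: inv_into_growth_time_eq)
    fix t :: real assume t: "t \<in> {0..1}"
    show "0 < x t" unfolding x_def by simp
    have "((\<lambda>s. G (growth_time a y + s)) has_real_derivative
        inverse (time_rate (G (growth_time a y + t))) * 1) (at t)"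
      by (rule DERIV_chain2[OF G']) (use t in \<open>auto intro!: derivative_eq_intros\<close>)
    then have "(x has_real_derivative
        x t * (\<alpha>T * (inverse (time_rate (G (growth_time a y + t))) * 1))) (at t)"
      unfolding x_def by (intro DERIV_chain2[OF DERIV_exp] DERIV_cmult)
    moreover have "\<alpha>T * inverse (time_rate (G (growth_time a y + t))) = \<phi> (x t)"
      unfolding time_rate_def x_def using \<alpha>T_pos \<phi>_pos[of "x t"] by (simp add: x_def field_simps)
    ultimately show "(x has_real_derivative x t * \<phi> (x t)) (at t within {0..1})"
      by (auto intro: has_field_derivative_at_within)
  qed
  then show ?thesis by blast
qed

lemma growth_sol_log_has_derivative:
  assumes sol: "growth_sol \<phi> x0 x" and t: "t \<in> {0..1}"
  shows "((\<lambda>t. ln (x t) / \<alpha>T) has_real_derivative \<phi> (x t) / \<alpha>T) (at t within {0..1})"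
proof -
  have pos: "0 < x t" and der: "(x has_real_derivative x t * \<phi> (x t)) (at t within {0..1})"
    using sol t unfolding growth_sol_def by auto
  have "((\<lambda>t. ln (x t)) has_real_derivative inverse (x t) * (x t * \<phi> (x t))) (at t within {0..1})"
    by (rule DERIV_chain2[OF DERIV_ln der]) (use pos in auto)
  then have "((\<lambda>t. ln (x t) / \<alpha>T) has_real_derivative
      inverse (x t) * (x t * \<phi> (x t)) / \<alpha>T) (at t within {0..1})"
    by (rule DERIV_cdivide)
  moreover have "inverse (x t) * (x t * \<phi> (x t)) = \<phi> (x t)" using pos by simp
  ultimately show ?thesis by simp
qed

lemma growth_sol_growth_time:
  assumes sol: "growth_sol \<phi> (exp (\<alpha>T * y)) x" and "a < y"
  shows "y \<le> ln (x 1) / \<alpha>T" and "growth_time a (ln (x 1) / \<alpha>T) = growth_time a y + 1"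
proof -
  define Y where "Y t = ln (x t) / \<alpha>T" for t
  have x_pos: "0 < x t" if "t \<in> {0..1}" for t using sol that unfolding growth_sol_def by auto
  have Y': "(Y has_real_derivative \<phi> (x t) / \<alpha>T) (at t within {0..1})" if "t \<in> {0..1}" for t
    unfolding Y_def using growth_sol_log_has_derivative[OF sol that] .
  have Y0: "Y 0 = y" unfolding Y_def using sol \<alpha>T_pos by (simp add: growth_sol_def)
  have Y_ge: "y \<le> Y t" if t: "t \<in> {0..1}" for t
  proof -
    have "Y 0 \<le> Y t"
    proof (rule DERIV_nonneg_imp_increasing_open[of 0 t Y])
      show "0 \<le> t" using t by simp
      show "continuous_on {0..t} Y"
        using Y' DERIV_continuous continuous_on_eq_continuous_within continuous_on_subset t
        by (metis atLeastAtMost_iff atLeastatMost_subset_iff order_refl)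
      fix s assume s: "0 < s" "s < t"
      have "at s within {0..1} = at s" using s t by (intro at_within_Icc_at) auto
      then show "\<exists>D. (Y has_real_derivative D) (at s) \<and> 0 \<le> D"
        using Y'[of s] s t x_pos[of s] \<phi>_pos[of "x s"] \<alpha>T_pos
        by (intro exI[of _ "\<phi> (x s) / \<alpha>T"]) auto
    qed
    then show ?thesis using Y0 by simp
  qed
  have "((\<lambda>t. growth_time a (Y t) - t) has_real_derivative 0) (at t within {0..1})"
    if t: "t \<in> {0..1}" for t
  proof -
    have "((\<lambda>t. growth_time a (Y t) - t) has_real_derivative
        time_rate (Y t) * (\<phi> (x t) / \<alpha>T) - 1) (at t within {0..1})"
      using Y_ge[OF t] assms
      by (intro derivative_intros DERIV_chain2[OF growth_time_has_derivative Y'[OF t]]) auto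
    moreover have "time_rate (Y t) * (\<phi> (x t) / \<alpha>T) = 1"
      unfolding time_rate_def Y_def using \<alpha>T_pos x_pos[OF t] \<phi>_pos[of "x t"] by simp
    ultimately show ?thesis by simp
  qed
  then obtain C where "\<forall>t\<in>{0..1}. growth_time a (Y t) - t = C"
    using has_field_derivative_zero_constant[OF convex_real_interval(5)] by blast
  then have "growth_time a (Y 1) - 1 = growth_time a (Y 0) - 0"
    by (metis atLeastAtMost_iff order_refl zero_le_one)
  then show "y \<le> ln (x 1) / \<alpha>T" "growth_time a (ln (x 1) / \<alpha>T) = growth_time a y + 1"
    using Y_ge[of 1] Y0 unfolding Y_def by auto
qed

lemma F_map_growth_sol:
  assumes sol: "growth_sol \<phi> (exp (\<alpha>T * y)) x"
  shows "F y = ln (x 1) / \<alpha>T"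
proof -
  have "(THE v. \<exists>x. growth_sol \<phi> (exp (\<alpha>T * y)) x \<and> v = x 1) = x 1"
  proof (rule the_equality)
    show "\<exists>x'. growth_sol \<phi> (exp (\<alpha>T * y)) x' \<and> x 1 = x' 1" using sol by blast
    fix v assume "\<exists>x'. growth_sol \<phi> (exp (\<alpha>T * y)) x' \<and> v = x' 1"
    then obtain x' where sol': "growth_sol \<phi> (exp (\<alpha>T * y)) x'" and v: "v = x' 1" by blast
    have "ln (x' 1) / \<alpha>T = ln (x 1) / \<alpha>T"
      using growth_sol_growth_time[OF sol, of "y - 1"] growth_sol_growth_time[OF sol', of "y - 1"]
        growth_time_eq_iff[of "y - 1" "ln (x' 1) / \<alpha>T" "ln (x 1) / \<alpha>T"] by auto
    moreover have "0 < x 1" "0 < x' 1" using sol sol' unfolding growth_sol_def by auto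
    ultimately show "v = x 1" using v \<alpha>T_pos by simp
  qed
  then show ?thesis unfolding F_map_def by simp
qed

lemma F_map_growth_time:
  assumes "a < y"
  shows "y \<le> F y" and "growth_time a (F y) = growth_time a y + 1"
  using growth_sol_exists[of y] growth_sol_growth_time[OF _ assms] F_map_growth_sol by auto

lemma strict_mono_F_map: "strict_mono F"
proof (rule strict_monoI)
  fix y y' :: real assume "y < y'"
  then have "growth_time (y - 1) (F y) < growth_time (y - 1) (F y')"
    using F_map_growth_time[of "y - 1"] growth_time_strict_mono[of "y - 1" y y'] by simp
  then show "F y < F y'"
    using F_map_growth_time(1)[of "y - 1"] F_map_growth_time(1)[of "y - 1" y'] \<open>y < y'\<close>
      growth_time_le_iff[of "y - 1" "F y'" "F y"] by fastforce
qed

lemma F_map_add_le: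
  assumes "0 \<le> \<delta>"
  shows "F (y + \<delta>) \<le> F y + \<delta>"
proof -
  let ?a = "y - 1"
  have "y \<le> F y" "y + \<delta> \<le> F (y + \<delta>)" using F_map_growth_time(1)[of ?a] assms by auto
  have "growth_time ?a (F (y + \<delta>)) =
      growth_time ?a (y + \<delta>) - growth_time ?a y + growth_time ?a (F y)"
    using F_map_growth_time(2)[of ?a y] F_map_growth_time(2)[of ?a "y + \<delta>"] assms by simp
  also have "\<dots> \<le> growth_time ?a (F y + \<delta>)"
    using growth_time_increment_mono[of ?a y "F y" \<delta>] \<open>y \<le> F y\<close> assms by simp
  finally show ?thesis
    using growth_time_le_iff[of ?a "F (y + \<delta>)" "F y + \<delta>"] \<open>y \<le> F y\<close> \<open>y + \<delta> \<le> F (y + \<delta>)\<close> assms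
    by simp
qed

section \<open>Optimal fractionation\<close>

lemma Yplus_ge_free_growth:
  assumes "0 < abT"
  shows "(\<And>k. k \<le> j \<Longrightarrow> 0 \<le> d k) \<Longrightarrow>
    (F ^^ j) (ln X0 / \<alpha>T) - (\<Sum>k\<le>j. BED_T abT (d k)) \<le> Yplus \<phi> \<alpha>T abT X0 d j"
proof (induction j)
  case (Suc j)
  let ?P = "(F ^^ j) (ln X0 / \<alpha>T)"
  let ?S = "\<Sum>k\<le>j. BED_T abT (d k)"
  have "0 \<le> ?S" using Suc.prems assms by (intro sum_nonneg BED_T_nonneg) auto
  have IH: "?P - ?S \<le> Yplus \<phi> \<alpha>T abT X0 d j" using Suc.IH Suc.prems by simp
  have "F ?P \<le> F (?P - ?S) + ?S"
    using F_map_add_le[OF \<open>0 \<le> ?S\<close>, of "?P - ?S"] by simp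
  also have "\<dots> \<le> F (Yplus \<phi> \<alpha>T abT X0 d j) + ?S"
    using IH strict_mono_F_map strict_mono_less_eq by auto
  finally show ?case by simp
qed simp

lemma Yplus_less_propagate:
  assumes less: "Yplus \<phi> \<alpha>T abT X0 d' i < Yplus \<phi> \<alpha>T abT X0 d i"
    and same: "\<And>k. i < k \<Longrightarrow> d' k = d k" and "i \<le> j"
  shows "Yplus \<phi> \<alpha>T abT X0 d' j < Yplus \<phi> \<alpha>T abT X0 d j"
  using \<open>i \<le> j\<close>
proof (induction j rule: dec_induct)
  case (step n)
  then have "F (Yplus \<phi> \<alpha>T abT X0 d' n) < F (Yplus \<phi> \<alpha>T abT X0 d n)"
    using strict_mono_F_map strict_monoD by blast
  then show ?case using same[of "Suc n"] step(1) by simp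
qed (fact less)

lemma last_day_dose_optimal:
  assumes "0 < abT" "0 < abO" "0 < \<gamma>" "0 \<le> c" "1 \<le> N" "\<gamma> * abT \<le> abO"
  shows "optimal \<phi> \<alpha>T abT X0 N abO \<gamma> c (\<lambda>i. if i = N - 1 then BED_O_inv abO \<gamma> c else 0)"
    (is "optimal _ _ _ _ _ _ _ _ ?D")
proof -
  have dose: "0 \<le> BED_O_inv abO \<gamma> c" "BED_O abO \<gamma> (BED_O_inv abO \<gamma> c) = c"
    using assms by (simp_all add: BED_O_inv_nonneg BED_O_BED_O_inv)
  have "(\<Sum>k<N. BED_O abO \<gamma> (?D k)) = (\<Sum>k<N. if k = N - 1 then c else 0)"
    using dose by (intro sum.cong) auto
  then have "(\<Sum>k<N. BED_O abO \<gamma> (?D k)) = c" using assms(5) by simp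
  then have feas: "feasible N abO \<gamma> c ?D" using dose unfolding feasible_def by simp
  have last: "{..N - 1} = {..<N}" using assms(5) by auto
  have "Yplus \<phi> \<alpha>T abT X0 ?D (N - 1) \<le> Yplus \<phi> \<alpha>T abT X0 d (N - 1)"
    if "feasible N abO \<gamma> c d" for d
  proof -
    let ?S = "\<Sum>k<N. BED_O abO \<gamma> (d k)"
    have d: "\<And>k. k < N \<Longrightarrow> 0 \<le> d k" and "?S \<le> c" using that unfolding feasible_def by auto
    have "0 \<le> ?S" using d assms by (intro sum_nonneg BED_O_nonneg) auto
    have "Yplus \<phi> \<alpha>T abT X0 ?D (N - 1) =
        (F ^^ (N - 1)) (ln X0 / \<alpha>T) - BED_T abT (BED_O_inv abO \<gamma> c)"
      by (subst Yplus_single_dose) auto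
    also have "\<dots> \<le> (F ^^ (N - 1)) (ln X0 / \<alpha>T) - BED_T abT (BED_O_inv abO \<gamma> ?S)"
      using assms \<open>0 \<le> ?S\<close> \<open>?S \<le> c\<close>
      by (simp add: BED_T_mono BED_O_inv_nonneg BED_O_inv_mono)
    also have "\<dots> \<le> (F ^^ (N - 1)) (ln X0 / \<alpha>T) - (\<Sum>k<N. BED_T abT (d k))"
      using BED_T_sum_le_merged[of abO \<gamma> abT N d] assms d by simp
    also have "\<dots> \<le> Yplus \<phi> \<alpha>T abT X0 d (N - 1)"
      using Yplus_ge_free_growth[OF assms(1), of "N - 1" d] d last by force
    finally show ?thesis .
  qed
  then show ?thesis using feas unfolding optimal_def by blast
qed

lemma optimal_doses_nondecreasing:
  assumes "0 < abT" "0 < abO" "0 < \<gamma>" "abO < \<gamma> * abT"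
    and opt: "optimal \<phi> \<alpha>T abT X0 N abO \<gamma> c d" and i: "Suc i < N"
  shows "d i \<le> d (Suc i)"
proof (rule ccontr)
  let ?Y = "Yplus \<phi> \<alpha>T abT X0"
  assume "\<not> d i \<le> d (Suc i)"
  then have less: "d (Suc i) < d i" by simp
  have feas: "feasible N abO \<gamma> c d" using opt unfolding optimal_def by blast
  then have nonneg: "0 \<le> d (Suc i)" using i unfolding feasible_def by simp
  define m where "m = BED_O_inv abO \<gamma> ((BED_O abO \<gamma> (d i) + BED_O abO \<gamma> (d (Suc i))) / 2)"
  have m: "0 \<le> m" "2 * BED_O abO \<gamma> m = BED_O abO \<gamma> (d i) + BED_O abO \<gamma> (d (Suc i))"
    and "m \<le> d i"
    unfolding m_def using BED_O_inv_mean[of abO \<gamma> "d (Suc i)" "d i"] assms nonneg less by auto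
  define d' where "d' = d(i := m, Suc i := m)"
  have "?Y d' i = ?Y d i + (BED_T abT (d i) - BED_T abT m)"
    using Yplus_change_last_dose[of i d' d] by (simp add: d'_def)
  moreover have "0 \<le> BED_T abT (d i) - BED_T abT m"
    using BED_T_mono[OF assms(1) m(1) \<open>m \<le> d i\<close>] by simp
  ultimately have "F (?Y d' i) \<le> F (?Y d i) + (BED_T abT (d i) - BED_T abT m)"
    using F_map_add_le by simp
  then have "?Y d' (Suc i) < ?Y d (Suc i)"
    using BED_T_add_less_equalized[of abO \<gamma> abT "d (Suc i)" "d i" m] assms nonneg less m
    by (simp add: d'_def)
  then have "?Y d' (N - 1) < ?Y d (N - 1)"
    by (rule Yplus_less_propagate) (use i in \<open>simp_all add: d'_def\<close>)
  moreover have "feasible N abO \<gamma> c d'"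
    unfolding d'_def using feasible_equalize_pair[OF feas i m] .
  then have "?Y d (N - 1) \<le> ?Y d' (N - 1)" using opt unfolding optimal_def by blast
  ultimately show False by simp
qed

end

theorem theorem3:
  fixes \<alpha>T \<beta>T abO \<gamma> c X0 :: real and \<phi> :: "real \<Rightarrow> real" and N :: nat
  assumes "0 < \<alpha>T" "0 < \<beta>T" "0 < abO" "0 < \<gamma>" "\<gamma> < 1" "0 < c" "0 < X0" "1 \<le> N"
    and "continuous_on {0<..} \<phi>"
    and "\<And>x y. 0 < x \<Longrightarrow> x \<le> y \<Longrightarrow> \<phi> y \<le> \<phi> x"
    and "\<And>x. 0 < x \<Longrightarrow> 0 < \<phi> x"
  shows "(abO \<ge> \<gamma> * (\<alpha>T / \<beta>T) \<longrightarrow>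
            optimal \<phi> \<alpha>T (\<alpha>T / \<beta>T) X0 N abO \<gamma> c
              (\<lambda>i. if i = N - 1 then abO / (2 * \<gamma>) * (sqrt (1 + 4 * c / abO) - 1) else 0))
       \<and> (abO < \<gamma> * (\<alpha>T / \<beta>T) \<longrightarrow>
            (\<forall>d. optimal \<phi> \<alpha>T (\<alpha>T / \<beta>T) X0 N abO \<gamma> c d \<longrightarrow>
                 (\<forall>i. Suc i < N \<longrightarrow> d i \<le> d (Suc i))))"
proof -
  interpret growth_law \<phi> \<alpha>T by unfold_locales (use assms in auto)
  have abT: "0 < \<alpha>T / \<beta>T" using assms by simp
  have dose: "abO / (2 * \<gamma>) * (sqrt (1 + 4 * c / abO) - 1) = BED_O_inv abO \<gamma> c"
    by (simp add: BED_O_inv_def)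
  show ?thesis
  proof (intro conjI impI allI)
    assume "\<gamma> * (\<alpha>T / \<beta>T) \<le> abO"
    then show "optimal \<phi> \<alpha>T (\<alpha>T / \<beta>T) X0 N abO \<gamma> c
        (\<lambda>i. if i = N - 1 then abO / (2 * \<gamma>) * (sqrt (1 + 4 * c / abO) - 1) else 0)"
      unfolding dose using assms(3,4,6,8) by (intro last_day_dose_optimal[OF abT]) simp_all
  next
    fix d i
    assume "abO < \<gamma> * (\<alpha>T / \<beta>T)" "optimal \<phi> \<alpha>T (\<alpha>T / \<beta>T) X0 N abO \<gamma> c d" "Suc i < N"
    then show "d i \<le> d (Suc i)" using assms(3,4) by (intro optimal_doses_nondecreasing[OF abT])
  qed
qed

end
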